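(* Let $X_3=\{0,1,2\}$ and let $\alpha,\beta:X_3^*\to X_3^*$ be the length-preserving maps defined recursively by $\alpha(\emptyset)=\beta(\emptyset)=\emptyset$ and, for every word $w\in X_3^*$, \[\alpha(0w)=0\alpha(w),\quad \alpha(1w)=1\alpha(w),\quad \alpha(2w)=1\beta(w),\] \[\beta(0w)=1\alpha(w),\quad \beta(1w)=1\beta(w),\quad \beta(2w)=0\beta(w).\] Let $S_L$ be the semigroup of maps $X_3^*\to X_3^*$ generated by $\alpha$ and $\beta$ under composition. Then $S_L$ has the semigroup presentation \[S_L=\langle \alpha,\beta \mid \alpha^2=\alpha,\ \alpha\beta=\beta\rangle,\] i.e. the homomorphism from the semigroup with this presentation to $S_L$ sending the generators to the maps $\alpha,\beta$ is an isomorphism.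
   Context: Composition of maps is performed from right to left: $(\mu\nu)(u)=\mu(\nu(u))$. The maps $\alpha,\beta$ are the states of a finite 3-to-2 transducer (outputs lie in $\{0,1\}^*\subset X_3^*$), regarded here as maps of ternary words. *)

theory Defs
  imports Main
begin

datatype X3 = X0 | X1 | X2

fun alpha :: "X3 list \<Rightarrow> X3 list" and beta :: "X3 list \<Rightarrow> X3 list" where
  "alpha [] = []"
| "alpha (X0 # w) = X0 # alpha w"
| "alpha (X1 # w) = X1 # alpha w"
| "alpha (X2 # w) = X1 # beta w"
| "beta [] = []"
| "beta (X0 # w) = X1 # alpha w"
| "beta (X1 # w) = X1 # beta w"
| "beta (X2 # w) = X0 # beta w"

datatype gen = GA | GB

text \<open>Evaluation of a word g1 g2 ... gn over the generators as the composite map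
  g1 \<circ> g2 \<circ> ... \<circ> gn (composition right to left).\<close>
definition gen_map :: "gen \<Rightarrow> (X3 list \<Rightarrow> X3 list)" where
  "gen_map g = (case g of GA \<Rightarrow> alpha | GB \<Rightarrow> beta)"

definition eval_word :: "gen list \<Rightarrow> (X3 list \<Rightarrow> X3 list)" where
  "eval_word ws = foldr (\<lambda>g f. gen_map g \<circ> f) ws id"

text \<open>The free semigroup on {alpha, beta}: nonempty words.\<close>
definition free_words :: "gen list set" where
  "free_words = {ws. ws \<noteq> []}"

definition S_L :: "(X3 list \<Rightarrow> X3 list) set" where
  "S_L = eval_word ` free_words"

inductive pres_eq :: "gen list \<Rightarrow> gen list \<Rightarrow> bool" where
  rel1: "pres_eq (x @ [GA, GA] @ y) (x @ [GA] @ y)"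
| rel2: "pres_eq (x @ [GA, GB] @ y) (x @ [GB] @ y)"
| refl: "pres_eq w w"
| sym: "pres_eq u v \<Longrightarrow> pres_eq v u"
| trans: "pres_eq u v \<Longrightarrow> pres_eq v w \<Longrightarrow> pres_eq u w"

definition pres_rel :: "(gen list \<times> gen list) set" where
  "pres_rel = {(u, v). u \<in> free_words \<and> v \<in> free_words \<and> pres_eq u v}"

definition presented_semigroup :: "gen list set set" where
  "presented_semigroup = free_words // pres_rel"

end

theory Submission
  imports Defs
begin

text \<open>Both \<open>alpha\<close> and \<open>beta\<close> output binary words, and \<open>alpha\<close> is the identity on
  binary words; this gives the two relations. Conversely, the relations let every \<open>alpha\<close>
  that is followed by a letter be absorbed, so every word is equivalent to \<open>beta\<^sup>n\<close> or to
  \<open>beta\<^sup>n alpha\<close>. On a binary word \<open>beta\<close> turns the first \<open>0\<close> into \<open>1\<close>, so both maps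
  send \<open>0\<^sup>k\<close> to \<open>1\<^sup>n 0\<^sup>k\<^sup>-\<^sup>n\<close>, which recovers \<open>n\<close>. On the input \<open>2 0\<^sup>n\<close> the map
  \<open>beta\<^sup>n alpha\<close> outputs \<open>n + 1\<close> ones, whereas \<open>beta\<^sup>n\<close> (with \<open>n \<ge> 1\<close>) outputs only \<open>n\<close>:
  its first step writes a \<open>0\<close> for the \<open>2\<close>, which uses up one of the later steps. So distinct
  normal forms give distinct maps, and the presentation is faithful.\<close>

lemma length_alpha_beta: "length (alpha w) = length w \<and> length (beta w) = length w"
proof (induction w)
  case (Cons x w)
  then show ?case by (cases x) auto
qed simp

lemma X2_notin_alpha_beta: "X2 \<notin> set (alpha w) \<and> X2 \<notin> set (beta w)"
proof (induction w)
  case (Cons x w)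
  then show ?case by (cases x) auto
qed simp

lemma alpha_binary: "X2 \<notin> set w \<Longrightarrow> alpha w = w"
proof (induction w)
  case (Cons x w)
  then show ?case by (cases x) auto
qed simp

lemma count_beta_binary:
  "X2 \<notin> set w \<Longrightarrow> count_list (beta w) X1 = min (length w) (Suc (count_list w X1))"
proof (induction w)
  case (Cons x w)
  then show ?case using count_le_length[of w X1] by (cases x) (auto simp: alpha_binary)
qed simp

lemma funpow_beta_binary_length:
  "X2 \<notin> set w \<Longrightarrow> X2 \<notin> set ((beta ^^ n) w) \<and> length ((beta ^^ n) w) = length w"
  by (induction n) (auto simp: X2_notin_alpha_beta length_alpha_beta)

lemma count_funpow_beta_binary:
  "X2 \<notin> set w \<Longrightarrow> count_list ((beta ^^ n) w) X1 = min (length w) (count_list w X1 + n)"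
proof (induction n)
  case (Suc n)
  then show ?case using funpow_beta_binary_length[OF Suc.prems, of n] by (simp add: count_beta_binary)
qed (simp add: count_le_length)

lemma eval_word_Nil [simp]: "eval_word [] = id"
  by (simp add: eval_word_def)

lemma eval_word_Cons [simp]: "eval_word (g # w) = gen_map g \<circ> eval_word w"
  by (simp add: eval_word_def)

lemma eval_word_append: "eval_word (u @ v) = eval_word u \<circ> eval_word v"
  by (induction u) auto

lemma eval_word_replicate_GB: "eval_word (replicate n GB) = beta ^^ n"
  by (induction n) (auto simp: gen_map_def funpow_Suc_right[symmetric])

lemma alpha_comp_alpha: "alpha \<circ> alpha = alpha"
  and alpha_comp_beta: "alpha \<circ> beta = beta"
  by (simp_all add: fun_eq_iff alpha_binary X2_notin_alpha_beta)

lemma pres_eq_imp_eval_word_eq: "pres_eq u v \<Longrightarrow> eval_word u = eval_word v"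
  by (induction rule: pres_eq.induct)
    (simp_all add: eval_word_append gen_map_def alpha_comp_alpha alpha_comp_beta
      flip: comp_assoc)

lemma pres_eq_Cons: "pres_eq u v \<Longrightarrow> pres_eq (g # u) (g # v)"
proof (induction rule: pres_eq.induct)
  case (rel1 x y)
  show ?case using pres_eq.rel1[of "g # x" y] by simp
next
  case (rel2 x y)
  show ?case using pres_eq.rel2[of "g # x" y] by simp
qed (auto intro: pres_eq.intros)

lemma pres_eq_GA_absorb: "pres_eq (GA # g # w) (g # w)"
  using pres_eq.rel1[of "[]" w] pres_eq.rel2[of "[]" w] by (cases g) simp_all

definition normal_form :: "gen list \<Rightarrow> gen list" where
  "normal_form w = replicate (count_list w GB) GB @ (if last w = GA then [GA] else [])"

lemma normal_form_nonempty: "w \<noteq> [] \<Longrightarrow> normal_form w \<noteq> []"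
  by (cases "last w") (auto simp: normal_form_def count_list_0_iff dest: last_in_set)

lemma pres_eq_normal_form: "w \<noteq> [] \<Longrightarrow> pres_eq w (normal_form w)"
proof (induction w)
  case (Cons g w)
  show ?case
  proof (cases "w = []")
    case True
    then show ?thesis by (cases g) (simp_all add: normal_form_def pres_eq.refl)
  next
    case False
    then have "pres_eq (g # w) (g # normal_form w)"
      using Cons.IH pres_eq_Cons by blast
    moreover have "pres_eq (g # normal_form w) (normal_form (g # w))"
    proof (cases g)
      case GA
      obtain h v where "normal_form w = h # v"
        using normal_form_nonempty[OF False] by (cases "normal_form w") auto
      then show ?thesis using GA False pres_eq_GA_absorb by (simp add: normal_form_def)
    next
      case GB
      then show ?thesis using False by (simp add: normal_form_def pres_eq.refl)
    qed
    ultimately show ?thesis by (rule pres_eq.trans)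
  qed
qed simp

lemma eval_word_eq_normal_form:
  "w \<noteq> [] \<Longrightarrow> eval_word w = beta ^^ count_list w GB \<circ> (if last w = GA then alpha else id)"
  using pres_eq_imp_eval_word_eq[OF pres_eq_normal_form]
  by (simp add: normal_form_def eval_word_append eval_word_replicate_GB gen_map_def)

lemma count_eval_word_zeros:
  "w \<noteq> [] \<Longrightarrow> count_list (eval_word w (replicate k X0)) X1 = min k (count_list w GB)"
  by (simp add: eval_word_eq_normal_form alpha_binary count_funpow_beta_binary)

lemma count_eval_word_X2_zeros:
  assumes "w \<noteq> []"
  shows "count_list (eval_word w (X2 # replicate (count_list w GB) X0)) X1 =
    (if last w = GA then count_list w GB + 1 else count_list w GB)"
proof -
  let ?c = "count_list w GB"
  show ?thesis
  proof (cases "last w")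
    case GA
    let ?v = "alpha (X2 # replicate ?c X0)"
    have "X2 \<notin> set ?v" "length ?v = Suc ?c" "count_list ?v X1 \<ge> 1"
      using X2_notin_alpha_beta length_alpha_beta by simp_all
    then show ?thesis
      using GA assms by (simp add: eval_word_eq_normal_form count_funpow_beta_binary)
  next
    case GB
    then obtain d where d: "?c = Suc d"
      using assms by (cases ?c) (auto simp: count_list_0_iff dest: last_in_set)
    have "beta (X2 # replicate (Suc d) X0) = X0 # X1 # replicate d X0"
      by (simp add: alpha_binary)
    then have "eval_word w (X2 # replicate ?c X0) = (beta ^^ d) (X0 # X1 # replicate d X0)"
      using GB assms by (simp add: d eval_word_eq_normal_form funpow_simps_right del: funpow.simps)
    then show ?thesis
      using GB by (simp add: d count_funpow_beta_binary)
  qed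
qed

lemma eval_word_inj_normal_form:
  assumes "u \<noteq> []" "v \<noteq> []" "eval_word u = eval_word v"
  shows "normal_form u = normal_form v"
proof -
  have "count_list u GB = count_list v GB"
    using count_eval_word_zeros[OF assms(1), of "count_list u GB + count_list v GB"]
      count_eval_word_zeros[OF assms(2), of "count_list u GB + count_list v GB"] assms(3)
    by simp
  moreover have "last u = GA \<longleftrightarrow> last v = GA"
    using count_eval_word_X2_zeros[OF assms(1)] count_eval_word_X2_zeros[OF assms(2)]
      assms(3) calculation by (auto split: if_splits)
  ultimately show ?thesis by (simp add: normal_form_def)
qed

lemma pres_eq_iff_eval_word_eq:
  assumes "u \<noteq> []" "v \<noteq> []"
  shows "pres_eq u v \<longleftrightarrow> eval_word u = eval_word v"
proof
  assume "eval_word u = eval_word v"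
  then have "normal_form u = normal_form v"
    using assms eval_word_inj_normal_form by blast
  then show "pres_eq u v"
    using assms pres_eq_normal_form by (metis pres_eq.sym pres_eq.trans)
qed (rule pres_eq_imp_eval_word_eq)

lemma bij_betw_quotient_fibres:
  assumes "R = {(x, y). x \<in> A \<and> y \<in> A \<and> f x = f y}"
  shows "\<exists>h. (\<forall>x \<in> A. h (R `` {x}) = f x) \<and> bij_betw h (A // R) (f ` A)"
proof (intro exI conjI ballI)
  define h where "h X = the_elem (f ` X)" for X
  have fibre: "R `` {x} = {y \<in> A. f y = f x}" if "x \<in> A" for x
    using that assms by auto
  show h_fibre: "h (R `` {x}) = f x" if "x \<in> A" for x
  proof -
    have "f ` (R `` {x}) = {f x}"
      using that fibre by auto
    then show ?thesis by (simp add: h_def)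
  qed
  show "bij_betw h (A // R) (f ` A)"
  proof (rule bij_betw_imageI)
    show "inj_on h (A // R)"
    proof (rule inj_onI)
      fix X Y assume "X \<in> A // R" "Y \<in> A // R" and eq: "h X = h Y"
      then obtain x y where xy: "x \<in> A" "X = R `` {x}" "y \<in> A" "Y = R `` {y}"
        unfolding quotient_def by blast
      with eq have "f x = f y" by (simp add: h_fibre)
      with xy show "X = Y" by (simp add: fibre)
    qed
    show "h ` (A // R) = f ` A"
    proof
      show "h ` (A // R) \<subseteq> f ` A"
        by (auto simp: quotient_def h_fibre)
      show "f ` A \<subseteq> h ` (A // R)"
      proof
        fix b assume "b \<in> f ` A"
        then obtain x where x: "x \<in> A" "b = f x" by blast
        have "R `` {x} \<in> A // R" using x(1) by (rule quotientI)
        moreover have "b = h (R `` {x})" using x h_fibre by simp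
        ultimately show "b \<in> h ` (A // R)" by (rule rev_image_eqI)
      qed
    qed
  qed
qed

theorem mainTheorem1:
  shows "\<exists>h. (\<forall>w \<in> free_words. h (pres_rel `` {w}) = eval_word w)
            \<and> bij_betw h presented_semigroup S_L"
proof -
  have "pres_rel = {(u, v). u \<in> free_words \<and> v \<in> free_words \<and> eval_word u = eval_word v}"
    by (auto simp: pres_rel_def free_words_def pres_eq_iff_eval_word_eq)
  then show ?thesis
    unfolding presented_semigroup_def S_L_def by (rule bij_betw_quotient_fibres)
qed

end
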